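(* Let $D\ge1$, let $Q_D$ be the $D$-dimensional hypercube on $X=\{0,1\}^D$ with adjacency matrix $A$. The set $$\{I,\alpha_1,\ldots,\alpha_D\}\cup\{\alpha^*_iA\alpha^*_j-\alpha^*_jA\alpha^*_i\mid 1\le i<j\le D\}$$ is a basis for the space of $A$-like matrices of $Q_D$. In particular this space has dimension $1+D+\binom{D}{2}$.
   Context: $Q_D$ is the graph with vertex set $X=\{0,1\}^D$, two vertices adjacent iff they differ in exactly one coordinate. Matrices are real with rows and columns indexed by $X$; $I$ is the identity. A matrix $B$ is $A$-like if $BA=AB$ and $B_{xy}=0$ for all $x,y\in X$ that are neither equal nor adjacent. For $1\le i\le D$, $\alpha_i$ has $(x,y)$-entry $1$ if $x,y$ differ in the $i$-th coordinate and agree in all others, and $0$ otherwise; $\alpha^*_i$ is the diagonal matrix with $(x,x)$-entry $1$ if $x_i=0$ and $-1$ if $x_i=1$. *)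

theory Defs
  imports "HOL-Analysis.Analysis" "HOL-Library.Function_Algebras"
begin

text \<open>Vertices of Q_D: boolean lists of length D (False = 0, True = 1).
  Coordinate i (1-based, 1 \<le> i \<le> D) of x is x ! (i - 1).
  Real matrices indexed by X are functions bool list \<Rightarrow> bool list \<Rightarrow> real that
  vanish outside X \<times> X.\<close>

type_synonym hmat = "bool list \<Rightarrow> bool list \<Rightarrow> real"

definition hcX :: "nat \<Rightarrow> bool list set" where
  "hcX D = {x. length x = D}"

definition is_hmat :: "nat \<Rightarrow> hmat \<Rightarrow> bool" where
  "is_hmat D B \<longleftrightarrow> (\<forall>x y. x \<notin> hcX D \<or> y \<notin> hcX D \<longrightarrow> B x y = 0)"

definition hmult :: "nat \<Rightarrow> hmat \<Rightarrow> hmat \<Rightarrow> hmat" where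
  "hmult D B C = (\<lambda>x y. \<Sum>z\<in>hcX D. B x z * C z y)"

definition hscale :: "real \<Rightarrow> hmat \<Rightarrow> hmat" where
  "hscale c B = (\<lambda>x y. c * B x y)"

definition hc_adj :: "nat \<Rightarrow> bool list \<Rightarrow> bool list \<Rightarrow> bool" where
  "hc_adj D x y \<longleftrightarrow> x \<in> hcX D \<and> y \<in> hcX D \<and> card {k. k < D \<and> x ! k \<noteq> y ! k} = 1"

definition hcA :: "nat \<Rightarrow> hmat" where
  "hcA D = (\<lambda>x y. if hc_adj D x y then 1 else 0)"

definition hcI :: "nat \<Rightarrow> hmat" where
  "hcI D = (\<lambda>x y. if x \<in> hcX D \<and> x = y then 1 else 0)"

definition alpha :: "nat \<Rightarrow> nat \<Rightarrow> hmat" where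
  "alpha D i = (\<lambda>x y. if x \<in> hcX D \<and> y \<in> hcX D \<and> x ! (i - 1) \<noteq> y ! (i - 1)
                         \<and> (\<forall>k<D. k \<noteq> i - 1 \<longrightarrow> x ! k = y ! k) then 1 else 0)"

definition alpha_star :: "nat \<Rightarrow> nat \<Rightarrow> hmat" where
  "alpha_star D i = (\<lambda>x y. if x \<in> hcX D \<and> x = y then (if x ! (i - 1) then -1 else 1) else 0)"

definition A_like :: "nat \<Rightarrow> hmat \<Rightarrow> bool" where
  "A_like D B \<longleftrightarrow> is_hmat D B \<and> hmult D B (hcA D) = hmult D (hcA D) B
     \<and> (\<forall>x\<in>hcX D. \<forall>y\<in>hcX D. x \<noteq> y \<and> \<not> hc_adj D x y \<longrightarrow> B x y = 0)"

definition hbasis_set :: "nat \<Rightarrow> hmat set" where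
  "hbasis_set D = {hcI D} \<union> alpha D ` {1..D} \<union>
     {hmult D (hmult D (alpha_star D i) (hcA D)) (alpha_star D j)
      - hmult D (hmult D (alpha_star D j) (hcA D)) (alpha_star D i) | i j. 1 \<le> i \<and> i < j \<and> j \<le> D}"

end

theory Submission
  imports Defs
begin

text \<open>Comparing the entries of
  \<open>BA\<close> and \<open>AB\<close> at distance 0, 1 and 2 (at larger distance both vanish) shows that \<open>BA = AB\<close>
  amounts to three local rules: the diagonal is constant along edges, at every vertex the outgoing
  and incoming edge values have the same sum, and the edge values around every square of the cube
  balance. Propagating these rules from the origin, \<open>B\<close> is determined by \<open>1 + D + (D choose 2)\<close>
  linear functionals at the origin: the diagonal entry, the symmetrised edge values, and the
  differences of parallel edge values across the squares through the origin. On \<open>I\<close>, the \<open>\<alpha>\<^sub>i\<close>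
  and the \<open>\<alpha>\<^sup>*\<^sub>iA\<alpha>\<^sup>*\<^sub>j - \<alpha>\<^sup>*\<^sub>jA\<alpha>\<^sup>*\<^sub>i\<close> these functionals form a diagonal table with nonzero
  entries, so the latter matrices are a basis.\<close>

section \<open>Bases from biorthogonal functionals\<close>

context vector_space
begin

lemma biorthogonal_basis:
  fixes v :: "'i \<Rightarrow> 'b" and phi :: "'i \<Rightarrow> 'b \<Rightarrow> 'a" and c :: "'i \<Rightarrow> 'a"
  assumes "finite P" and "subspace W" and "v ` P \<subseteq> W"
    and phi_add: "\<And>p x y. p \<in> P \<Longrightarrow> phi p (x + y) = phi p x + phi p y"
    and phi_scale: "\<And>p a x. p \<in> P \<Longrightarrow> phi p (scale a x) = a * phi p x"
    and phi_v: "\<And>p q. p \<in> P \<Longrightarrow> q \<in> P \<Longrightarrow> phi p (v q) = (if p = q then c p else 0)"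
    and c_nonzero: "\<And>p. p \<in> P \<Longrightarrow> c p \<noteq> 0"
    and separating: "\<And>w. w \<in> W \<Longrightarrow> \<forall>p\<in>P. phi p w = 0 \<Longrightarrow> w = 0"
  shows "independent (v ` P)" and "span (v ` P) = W" and "inj_on v P" and "dim W = card P"
proof -
  have phi_zero: "phi p 0 = 0" if "p \<in> P" for p
    using phi_scale[OF that, of 0 0] by simp
  have phi_sum: "phi p (sum f T) = (\<Sum>t\<in>T. phi p (f t))" if "p \<in> P" for p and f :: "'c \<Rightarrow> 'b" and T
    by (induction T rule: infinite_finite_induct) (simp_all add: phi_zero[OF that] phi_add[OF that])
  have phi_diff: "phi p (x - y) = phi p x - phi p y" if "p \<in> P" for p x y
    using phi_add[OF that, of "x - y" y] by simp
  show inj: "inj_on v P"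
  proof (rule inj_onI, rule ccontr)
    fix p q assume "p \<in> P" "q \<in> P" "v p = v q" "p \<noteq> q"
    then show False using phi_v[of p p] phi_v[of p q] c_nonzero[of p] by simp
  qed
  show indep: "independent (v ` P)"
  proof
    assume "dependent (v ` P)"
    then obtain T u w0 where T: "finite T" "T \<subseteq> v ` P" and lin: "(\<Sum>w\<in>T. scale (u w) w) = 0"
      and w0: "w0 \<in> T" "u w0 \<noteq> 0"
      unfolding dependent_explicit by blast
    obtain p where p: "p \<in> P" "w0 = v p" using w0 T by blast
    have "phi p (scale (u w) w) = (if w = w0 then u w0 * c p else 0)" if "w \<in> T" for w
      using that T p inj phi_v[of p] by (auto simp: phi_scale inj_on_eq_iff)
    then have "phi p (\<Sum>w\<in>T. scale (u w) w) = u w0 * c p"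
      using T w0 by (simp add: phi_sum[OF p(1)] cong: sum.cong)
    then show False using lin w0 c_nonzero[OF p(1)] phi_zero[OF p(1)] by simp
  qed
  show span: "span (v ` P) = W"
  proof
    show span_sub: "span (v ` P) \<subseteq> W" using assms(2,3) by (simp add: span_minimal)
    show "W \<subseteq> span (v ` P)"
    proof
      fix w assume w: "w \<in> W"
      define w' where "w' = (\<Sum>q\<in>P. scale (phi q w / c q) (v q))"
      have w'_span: "w' \<in> span (v ` P)"
        unfolding w'_def by (intro span_sum span_scale span_base) auto
      have "phi p w' = phi p w" if p: "p \<in> P" for p
      proof -
        have "phi p w' = (\<Sum>q\<in>P. if q = p then phi p w else 0)"
          unfolding w'_def phi_sum[OF p] using p c_nonzero by (intro sum.cong) (auto simp: phi_scale phi_v)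
        then show ?thesis using p assms(1) by simp
      qed
      moreover have "w - w' \<in> W"
        using w w'_span span_sub assms(2) subspace_diff by blast
      ultimately have "w - w' = 0" using separating[of "w - w'"] phi_diff by simp
      then show "w \<in> span (v ` P)" using w'_span by simp
    qed
  qed
  show "dim W = card P"
    using dim_span_eq_card_independent[OF indep] span card_image[OF inj] by simp
qed

end

section \<open>The hypercube\<close>

definition flip :: "bool list \<Rightarrow> nat \<Rightarrow> bool list" where
  "flip x k = x[k := \<not> x ! k]"

definition diff_coords :: "nat \<Rightarrow> bool list \<Rightarrow> bool list \<Rightarrow> nat set" where
  "diff_coords D x y = {k. k < D \<and> x ! k \<noteq> y ! k}"

definition origin :: "nat \<Rightarrow> bool list" where
  "origin D = replicate D False"

lemma hcX_iff: "x \<in> hcX D \<longleftrightarrow> length x = D"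
  by (simp add: hcX_def)

lemma finite_hcX: "finite (hcX D)"
  using finite_lists_length_eq[of "UNIV :: bool set"] by (simp add: hcX_def)

lemma origin_in_hcX [simp]: "origin D \<in> hcX D"
  by (simp add: origin_def hcX_def)

lemma length_origin [simp]: "length (origin D) = D"
  by (simp add: origin_def)

lemma length_flip [simp]: "length (flip x k) = length x"
  by (simp add: flip_def)

lemma flip_in_hcX [simp]: "x \<in> hcX D \<Longrightarrow> flip x k \<in> hcX D"
  by (simp add: hcX_iff)

lemma nth_flip: "j < length x \<Longrightarrow> flip x k ! j = (if j = k then \<not> x ! j else x ! j)"
  by (auto simp: flip_def nth_list_update)

lemma flip_flip [simp]: "flip (flip x k) k = x"
  by (cases "k < length x") (auto simp: flip_def list_update_beyond)

lemma flip_commute: "flip (flip x k) l = flip (flip x l) k"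
  by (cases "k = l") (auto simp: flip_def nth_list_update list_update_swap)

lemma flip_eq_flip_iff: "k < length x \<Longrightarrow> l < length x \<Longrightarrow> flip x k = flip x l \<longleftrightarrow> k = l"
  by (metis nth_flip)

lemma flip_neq [simp]: "k < length x \<Longrightarrow> flip x k \<noteq> x"
  by (metis nth_flip)

lemma neq_flip [simp]: "k < length x \<Longrightarrow> x \<noteq> flip x k"
  by (metis nth_flip)

lemma diff_coords_subset: "diff_coords D x y \<subseteq> {..<D}"
  by (auto simp: diff_coords_def)

lemma finite_diff_coords [simp]: "finite (diff_coords D x y)"
  by (rule finite_subset[OF diff_coords_subset]) simp

lemma diff_coords_commute: "diff_coords D x y = diff_coords D y x"
  by (auto simp: diff_coords_def)

lemma diff_coords_empty_iff: "x \<in> hcX D \<Longrightarrow> y \<in> hcX D \<Longrightarrow> diff_coords D x y = {} \<longleftrightarrow> x = y"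
  by (auto simp: diff_coords_def hcX_iff intro: nth_equalityI)

lemma diff_coords_flip_right:
  "x \<in> hcX D \<Longrightarrow> y \<in> hcX D \<Longrightarrow> k < D \<Longrightarrow>
   diff_coords D x (flip y k) = (diff_coords D x y - {k}) \<union> ({k} - diff_coords D x y)"
  by (auto simp: diff_coords_def nth_flip hcX_iff)

lemma diff_coords_flip: "x \<in> hcX D \<Longrightarrow> m < D \<Longrightarrow> diff_coords D x (flip x m) = {m}"
  by (auto simp: diff_coords_def nth_flip hcX_iff split: if_splits)

lemma diff_coords_eq_singleton:
  assumes "x \<in> hcX D" "y \<in> hcX D" "diff_coords D x y = {m}"
  shows "y = flip x m"
proof (rule nth_equalityI)
  show "length y = length (flip x m)" using assms by (simp add: hcX_iff)
  fix i assume "i < length y"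
  then have "i < D" using assms by (simp add: hcX_iff)
  then have "i = m \<longleftrightarrow> x ! i \<noteq> y ! i" using assms(3) by (auto simp: diff_coords_def set_eq_iff)
  then show "y ! i = flip x m ! i" using \<open>i < D\<close> assms by (auto simp: nth_flip hcX_iff)
qed

lemma diff_coords_eq_doubleton:
  assumes "x \<in> hcX D" "y \<in> hcX D" "diff_coords D x y = {m, n}" "m \<noteq> n"
  shows "y = flip (flip x m) n"
proof (rule nth_equalityI)
  show "length y = length (flip (flip x m) n)" using assms by (simp add: hcX_iff)
  fix i assume "i < length y"
  then have "i < D" using assms by (simp add: hcX_iff)
  then have "(i = m \<or> i = n) \<longleftrightarrow> x ! i \<noteq> y ! i" using assms(3) by (auto simp: diff_coords_def set_eq_iff)
  then show "y ! i = flip (flip x m) n ! i" using \<open>i < D\<close> assms by (auto simp: nth_flip hcX_iff)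
qed

lemma diff_coords_flip_flip:
  "x \<in> hcX D \<Longrightarrow> m < D \<Longrightarrow> n < D \<Longrightarrow> m \<noteq> n \<Longrightarrow> diff_coords D x (flip (flip x m) n) = {m, n}"
  by (auto simp: diff_coords_def nth_flip hcX_iff split: if_splits)

lemma hc_adj_iff_flip: "hc_adj D x y \<longleftrightarrow> x \<in> hcX D \<and> y \<in> hcX D \<and> (\<exists>k<D. y = flip x k)"
proof
  assume adj: "hc_adj D x y"
  then obtain m where m: "diff_coords D x y = {m}"
    unfolding hc_adj_def diff_coords_def[symmetric] by (auto simp: card_1_singleton_iff)
  then have "m < D" using diff_coords_subset by blast
  with adj m show "x \<in> hcX D \<and> y \<in> hcX D \<and> (\<exists>k<D. y = flip x k)"
    by (auto simp: hc_adj_def dest: diff_coords_eq_singleton)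
next
  assume "x \<in> hcX D \<and> y \<in> hcX D \<and> (\<exists>k<D. y = flip x k)"
  then obtain k where "x \<in> hcX D" "y = flip x k" "k < D" by auto
  moreover from this have "{k'. k' < D \<and> x ! k' \<noteq> y ! k'} = {k}"
    by (auto simp: nth_flip hcX_iff split: if_splits)
  ultimately show "hc_adj D x y" by (simp add: hc_adj_def)
qed

lemma hc_adj_commute: "hc_adj D x y \<longleftrightarrow> hc_adj D y x"
  unfolding hc_adj_def by (metis diff_coords_def diff_coords_commute)

lemma hcX_flip_induct [consumes 1, case_names origin flip]:
  assumes "x \<in> hcX D" and "P (origin D)"
    and "\<And>x m. x \<in> hcX D \<Longrightarrow> m < D \<Longrightarrow> P x \<Longrightarrow> P (flip x m)"
  shows "P x"
  using assms(1)
proof (induction "card {k. k < D \<and> x ! k}" arbitrary: x rule: less_induct)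
  case (less x)
  show ?case
  proof (cases "{k. k < D \<and> x ! k} = {}")
    case True
    then have "x = origin D" using less.prems by (auto intro!: nth_equalityI simp: origin_def hcX_iff)
    then show ?thesis using assms(2) by simp
  next
    case False
    then obtain m where m: "m < D" "x ! m" by auto
    have "{k. k < D \<and> flip x m ! k} = {k. k < D \<and> x ! k} - {m}"
      using less.prems m by (auto simp: nth_flip hcX_iff split: if_splits)
    then have "card {k. k < D \<and> flip x m ! k} < card {k. k < D \<and> x ! k}"
      using m card_Diff1_less[of "{k. k < D \<and> x ! k}" m] by simp
    then have "P (flip x m)" using less.hyps less.prems by simp
    then show ?thesis using assms(3)[OF _ m(1), of "flip x m"] less.prems by simp
  qed
qed

lemma sum_hcA_right:
  assumes "y \<in> hcX D"
  shows "(\<Sum>z\<in>hcX D. F z * hcA D z y) = (\<Sum>k<D. F (flip y k))"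
proof -
  have neighbours: "{z \<in> hcX D. hc_adj D z y} = flip y ` {..<D}"
    using assms by (auto simp: hc_adj_iff_flip hc_adj_commute[of _ y] intro: rev_image_eqI)
  have "(\<Sum>z\<in>hcX D. F z * hcA D z y) = (\<Sum>z\<in>{z \<in> hcX D. hc_adj D z y}. F z)"
    by (simp add: hcA_def sum.inter_filter[OF finite_hcX, symmetric] if_distrib cong: if_cong)
  also have "\<dots> = (\<Sum>k<D. F (flip y k))" unfolding neighbours
    by (rule sum.reindex_cong[where l="flip y"]) (use assms in \<open>auto simp: inj_on_def flip_eq_flip_iff hcX_iff\<close>)
  finally show ?thesis .
qed

lemma hmult_hcA_right:
  "hmult D B (hcA D) x y = (if y \<in> hcX D then \<Sum>k<D. B x (flip y k) else 0)"
proof (cases "y \<in> hcX D")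
  case True
  then show ?thesis by (simp add: hmult_def sum_hcA_right)
next
  case False
  then show ?thesis by (simp add: hmult_def hcA_def hc_adj_def)
qed

lemma hmult_hcA_left:
  "hmult D (hcA D) B x y = (if x \<in> hcX D then \<Sum>k<D. B (flip x k) y else 0)"
proof (cases "x \<in> hcX D")
  case True
  then show ?thesis
    using sum_hcA_right[OF True, of "\<lambda>z. B z y"] by (simp add: hmult_def hcA_def hc_adj_commute mult.commute)
next
  case False
  then show ?thesis by (simp add: hmult_def hcA_def hc_adj_def)
qed

section \<open>Commuting with the adjacency matrix\<close>

definition edge_supported :: "nat \<Rightarrow> hmat \<Rightarrow> bool" where
  "edge_supported D B \<longleftrightarrow> is_hmat D B \<and> (\<forall>x\<in>hcX D. \<forall>y\<in>hcX D. x \<noteq> y \<and> \<not> hc_adj D x y \<longrightarrow> B x y = 0)"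

lemma A_like_iff_edge_supported_commute:
  "A_like D B \<longleftrightarrow> edge_supported D B \<and> hmult D B (hcA D) = hmult D (hcA D) B"
  by (auto simp: A_like_def edge_supported_def)

lemma edge_supported_transpose: "edge_supported D B \<Longrightarrow> edge_supported D (\<lambda>x y. B y x)"
  unfolding edge_supported_def is_hmat_def by (metis hc_adj_commute)

lemma edge_supported_far_zero:
  assumes "edge_supported D B" "x \<in> hcX D" "y \<in> hcX D" "2 \<le> card (diff_coords D x y)"
  shows "B x y = 0"
proof -
  have "x \<noteq> y" using assms diff_coords_empty_iff[of x D y] by auto
  moreover have "\<not> hc_adj D x y" using assms(4) by (auto simp: hc_adj_def diff_coords_def)
  ultimately show ?thesis using assms(1-3) by (auto simp: edge_supported_def)
qed

lemma sum_flips_edge_supported: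
  assumes B: "edge_supported D B" and x: "x \<in> hcX D" and y: "y \<in> hcX D"
    and ne: "diff_coords D x y \<noteq> {}"
  shows "(\<Sum>k<D. B x (flip y k)) = (\<Sum>k\<in>diff_coords D x y. B x (flip y k))"
proof (rule sum.mono_neutral_right)
  show "\<forall>k\<in>{..<D} - diff_coords D x y. B x (flip y k) = 0"
  proof
    fix k assume k: "k \<in> {..<D} - diff_coords D x y"
    then have "diff_coords D x (flip y k) = insert k (diff_coords D x y)"
      using diff_coords_flip_right[OF x y] by auto
    then have "2 \<le> card (diff_coords D x (flip y k))"
      using k ne by (simp add: Suc_le_eq card_gt_0_iff)
    then show "B x (flip y k) = 0" using edge_supported_far_zero[OF B x] y by simp
  qed
qed (use diff_coords_subset in auto)

lemma sum_flips_edge_supported_far: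
  assumes B: "edge_supported D B" and x: "x \<in> hcX D" and y: "y \<in> hcX D"
    and far: "3 \<le> card (diff_coords D x y)"
  shows "(\<Sum>k<D. B x (flip y k)) = 0"
proof (rule sum.neutral, rule ballI)
  fix k assume "k \<in> {..<D}"
  then have "diff_coords D x y - {k} \<subseteq> diff_coords D x (flip y k)"
    using diff_coords_flip_right[OF x y] by auto
  then have "card (diff_coords D x y - {k}) \<le> card (diff_coords D x (flip y k))"
    by (intro card_mono) simp_all
  moreover have "card (diff_coords D x y) - 1 \<le> card (diff_coords D x y - {k})"
    using diff_card_le_card_Diff[of "{k}" "diff_coords D x y"] by simp
  ultimately have "card (diff_coords D x y) - 1 \<le> card (diff_coords D x (flip y k))"
    by linarith
  then show "B x (flip y k) = 0" using edge_supported_far_zero[OF B x] y far by simp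
qed

lemma hmult_hcA_entries_dist1:
  assumes B: "edge_supported D B" and x: "x \<in> hcX D" and m: "m < D"
  shows "hmult D B (hcA D) x (flip x m) = B x x"
    and "hmult D (hcA D) B x (flip x m) = B (flip x m) (flip x m)"
  using sum_flips_edge_supported[OF B x, of "flip x m"]
    sum_flips_edge_supported[OF edge_supported_transpose[OF B], of "flip x m" x] x m
  by (simp_all add: hmult_hcA_right hmult_hcA_left diff_coords_flip diff_coords_commute[of D "flip x m"])

lemma hmult_hcA_entries_dist2:
  assumes B: "edge_supported D B" and x: "x \<in> hcX D" and mn: "m < D" "n < D" "m \<noteq> n"
  shows "hmult D B (hcA D) x (flip (flip x m) n) = B x (flip x m) + B x (flip x n)"
    and "hmult D (hcA D) B x (flip (flip x m) n) = B (flip x m) (flip (flip x m) n) + B (flip x n) (flip (flip x n) m)"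
proof -
  let ?y = "flip (flip x m) n"
  have y: "?y \<in> hcX D" and d: "diff_coords D x ?y = {m, n}"
    using x mn by (simp_all add: diff_coords_flip_flip)
  have "(\<Sum>k<D. B x (flip ?y k)) = B x (flip ?y m) + B x (flip ?y n)"
    using sum_flips_edge_supported[OF B x y] d mn by simp
  moreover have "flip ?y m = flip x n"
    by (metis flip_commute flip_flip)
  ultimately show "hmult D B (hcA D) x ?y = B x (flip x m) + B x (flip x n)"
    using x y by (simp add: hmult_hcA_right add.commute)
  have "(\<Sum>k<D. B (flip x k) ?y) = B (flip x m) ?y + B (flip x n) ?y"
    using sum_flips_edge_supported[OF edge_supported_transpose[OF B] y x] d mn
    by (simp add: diff_coords_commute[of D ?y])
  moreover have "?y = flip (flip x n) m"
    by (rule flip_commute)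
  ultimately show "hmult D (hcA D) B x ?y = B (flip x m) ?y + B (flip x n) (flip (flip x n) m)"
    using x by (simp add: hmult_hcA_left)
qed

lemma hmult_hcA_entries_far:
  assumes B: "edge_supported D B" and x: "x \<in> hcX D" and y: "y \<in> hcX D"
    and far: "3 \<le> card (diff_coords D x y)"
  shows "hmult D B (hcA D) x y = 0" and "hmult D (hcA D) B x y = 0"
  using sum_flips_edge_supported_far[OF B x y far]
    sum_flips_edge_supported_far[OF edge_supported_transpose[OF B] y x] far x y
  by (simp_all add: hmult_hcA_right hmult_hcA_left diff_coords_commute[of D y])

definition local_commutation :: "nat \<Rightarrow> hmat \<Rightarrow> bool" where
  "local_commutation D B \<longleftrightarrow> edge_supported D B
    \<and> (\<forall>x\<in>hcX D. \<forall>k<D. B (flip x k) (flip x k) = B x x)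
    \<and> (\<forall>x\<in>hcX D. (\<Sum>k<D. B x (flip x k)) = (\<Sum>k<D. B (flip x k) x))
    \<and> (\<forall>x\<in>hcX D. \<forall>k<D. \<forall>l<D. k \<noteq> l \<longrightarrow>
         B x (flip x k) + B x (flip x l) = B (flip x k) (flip (flip x k) l) + B (flip x l) (flip (flip x l) k))"

lemma A_like_iff_local_commutation: "A_like D B \<longleftrightarrow> local_commutation D B"
proof
  assume "A_like D B"
  then have B: "edge_supported D B" and comm: "\<And>x y. hmult D B (hcA D) x y = hmult D (hcA D) B x y"
    by (simp_all add: A_like_iff_edge_supported_commute)
  show "local_commutation D B"
    unfolding local_commutation_def
  proof (intro conjI ballI allI impI B)
    fix x k assume "x \<in> hcX D" "k < D"
    then show "B (flip x k) (flip x k) = B x x"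
      using comm[of x "flip x k"] by (simp add: hmult_hcA_entries_dist1[OF B])
  next
    fix x assume "x \<in> hcX D"
    then show "(\<Sum>k<D. B x (flip x k)) = (\<Sum>k<D. B (flip x k) x)"
      using comm[of x x] by (simp add: hmult_hcA_right hmult_hcA_left)
  next
    fix x k l assume "x \<in> hcX D" "k < D" "l < D" "k \<noteq> l"
    then show "B x (flip x k) + B x (flip x l) = B (flip x k) (flip (flip x k) l) + B (flip x l) (flip (flip x l) k)"
      using comm[of x "flip (flip x k) l"] by (simp add: hmult_hcA_entries_dist2[OF B])
  qed
next
  assume local: "local_commutation D B"
  then have B: "edge_supported D B" by (simp add: local_commutation_def)
  have "hmult D B (hcA D) x y = hmult D (hcA D) B x y" if x: "x \<in> hcX D" and y: "y \<in> hcX D" for x y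
  proof -
    consider "card (diff_coords D x y) = 0" | "card (diff_coords D x y) = 1"
      | "card (diff_coords D x y) = 2" | "3 \<le> card (diff_coords D x y)"
      by linarith
    then show ?thesis
    proof cases
      case 1
      then have "y = x" using diff_coords_empty_iff[OF x y] by simp
      then show ?thesis using local x by (simp add: hmult_hcA_right hmult_hcA_left local_commutation_def)
    next
      case 2
      then obtain m where m: "diff_coords D x y = {m}" by (auto simp: card_1_singleton_iff)
      then have "m < D" using diff_coords_subset by blast
      moreover have "y = flip x m" using diff_coords_eq_singleton[OF x y m] .
      ultimately show ?thesis using local x by (simp add: hmult_hcA_entries_dist1[OF B] local_commutation_def)
    next
      case 3
      then obtain m n where mn: "diff_coords D x y = {m, n}" "m \<noteq> n" by (auto simp: card_2_iff)
      then have "m < D" "n < D" using diff_coords_subset by blast+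
      moreover have "y = flip (flip x m) n" using diff_coords_eq_doubleton[OF x y mn] .
      ultimately show ?thesis using local x mn(2) by (simp add: hmult_hcA_entries_dist2[OF B] local_commutation_def)
    qed (simp add: hmult_hcA_entries_far[OF B x y])
  qed
  moreover have "hmult D B (hcA D) x y = hmult D (hcA D) B x y" if "x \<notin> hcX D \<or> y \<notin> hcX D" for x y
    using B that by (auto simp: hmult_hcA_right hmult_hcA_left edge_supported_def is_hmat_def)
  ultimately show "A_like D B"
    using B by (auto simp: A_like_iff_edge_supported_commute fun_eq_iff)
qed

section \<open>Edge functions\<close>

lemma square_rule_flip_invariant:
  fixes h :: "nat \<Rightarrow> bool list \<Rightarrow> real"
  assumes square: "\<And>x k l. x \<in> hcX D \<Longrightarrow> k < D \<Longrightarrow> l < D \<Longrightarrow> k \<noteq> l \<Longrightarrow>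
      h k x + h l x = h k (flip x l) + h l (flip x k)"
    and at_origin: "\<And>k l. k < D \<Longrightarrow> l < D \<Longrightarrow> k \<noteq> l \<Longrightarrow> h k (flip (origin D) l) = h k (origin D)"
    and kl: "k < D" "l < D" "k \<noteq> l" and x: "x \<in> hcX D"
  shows "h k (flip x l) = h k x"
proof -
  define g where "g x = h k (flip x l) - h k x" for x
  have "g x = 0"
    using x
  proof (induction rule: hcX_flip_induct)
    case origin
    then show ?case using at_origin kl by (simp add: g_def)
  next
    case (flip x m)
    have "g (flip x m) = g x \<or> g (flip x m) = - g x"
    proof -
      consider "m = l" | "m = k" | "m \<noteq> k" "m \<noteq> l" by blast
      then show ?thesis
      proof cases
        case 1
        then show ?thesis by (simp add: g_def)
      next
        case 2
        have "h k x + h l x = h k (flip x l) + h l (flip x k)"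
          using square flip.hyps kl by blast
        moreover have "h k (flip x k) + h l (flip x k) = h k (flip (flip x k) l) + h l x"
          using square[of "flip x k" k l] flip.hyps kl by simp
        ultimately show ?thesis using 2 by (simp add: g_def flip_commute[of x l k])
      next
        case 3
        \<comment> \<open>the square rule on the six faces of the 3-cube spanned by the directions k, l, m at x\<close>
        have "h k x + h l x = h k (flip x l) + h l (flip x k)"
          "h k (flip x m) + h l (flip x m) = h k (flip (flip x m) l) + h l (flip (flip x m) k)"
          "h l x + h m x = h l (flip x m) + h m (flip x l)"
          "h l (flip x k) + h m (flip x k) = h l (flip (flip x m) k) + h m (flip (flip x l) k)"
          "h k x + h m x = h k (flip x m) + h m (flip x k)"
          "h k (flip x l) + h m (flip x l) = h k (flip (flip x m) l) + h m (flip (flip x l) k)"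
          using square[of x] square[of "flip x m"] square[of "flip x k" l m] square[of "flip x l" k m]
            flip.hyps kl 3 by (simp_all add: flip_commute)
        then have "g (flip x m) = g x" unfolding g_def by linarith
        then show ?thesis by simp
      qed
    qed
    then show ?case using flip.IH by auto
  qed
  then show ?thesis by (simp add: g_def)
qed

lemma balanced_flip_invariant:
  fixes h :: "nat \<Rightarrow> bool list \<Rightarrow> real"
  assumes shift: "\<And>x k l. x \<in> hcX D \<Longrightarrow> k < D \<Longrightarrow> l < D \<Longrightarrow> k \<noteq> l \<Longrightarrow> h k (flip x l) = h k x"
    and balance: "\<And>x. x \<in> hcX D \<Longrightarrow> (\<Sum>k<D. h k x) = (\<Sum>k<D. h k (flip x k))"
    and k: "k < D" and x: "x \<in> hcX D"
  shows "h k (flip x k) = h k x"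
proof -
  define e where "e j x = h j (flip x j) - h j x" for j x
  have sum_e: "(\<Sum>j<D. e j x) = 0" if "x \<in> hcX D" for x
    using balance[OF that] by (simp add: e_def sum_subtractf)
  \<comment> \<open>flipping direction k changes the sign of e k and leaves every other e j unchanged\<close>
  have "e j (flip x k) = e j x - (if j = k then 2 * e k x else 0)" if "j < D" for j
  proof (cases "j = k")
    case False
    then show ?thesis
      using shift[of x j k] shift[of "flip x j" j k] that k x by (simp add: e_def flip_commute[of x k j])
  qed (simp add: e_def)
  then have "(\<Sum>j<D. e j (flip x k)) = (\<Sum>j<D. e j x) - 2 * e k x"
    using k by (simp add: sum_subtractf)
  then have "e k x = 0" using sum_e[of x] sum_e[of "flip x k"] x by simp
  then show ?thesis by (simp add: e_def)
qed

lemma local_commutation_eq_zero: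
  assumes local: "local_commutation D B" and diag: "B (origin D) (origin D) = 0"
    and sym: "\<And>k. k < D \<Longrightarrow> B (origin D) (flip (origin D) k) + B (flip (origin D) k) (origin D) = 0"
    and shift: "\<And>k l. k < l \<Longrightarrow> l < D \<Longrightarrow>
      B (origin D) (flip (origin D) k) = B (flip (origin D) l) (flip (flip (origin D) l) k)"
  shows "B = 0"
proof -
  define h where "h k x = B x (flip x k)" for k x
  let ?o = "origin D"
  have B: "edge_supported D B" using local by (simp add: local_commutation_def)
  have square: "h k x + h l x = h k (flip x l) + h l (flip x k)" if "x \<in> hcX D" "k < D" "l < D" "k \<noteq> l" for x k l
    using local that unfolding local_commutation_def h_def by (metis add.commute)
  have "h k (flip ?o l) = h k ?o" if "k < D" "l < D" "k \<noteq> l" for k l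
  proof (cases "k < l")
    case True
    then show ?thesis using shift[of k l] that by (simp add: h_def)
  next
    case False
    then show ?thesis using shift[of l k] square[of ?o k l] that by (simp add: h_def)
  qed
  then have flip_other: "h k (flip x l) = h k x" if "x \<in> hcX D" "k < D" "l < D" "k \<noteq> l" for x k l
    using square_rule_flip_invariant[OF square] that by blast
  have flip_same: "h k (flip x k) = h k x" if "x \<in> hcX D" "k < D" for x k
  proof (rule balanced_flip_invariant[where h = h, OF flip_other _ that(2,1)])
    show "(\<Sum>k<D. h k x) = (\<Sum>k<D. h k (flip x k))" if "x \<in> hcX D" for x
      using local that by (simp add: local_commutation_def h_def)
  qed
  have edge_zero: "h k x = 0" if "k < D" "x \<in> hcX D" for k x
    using that(2)
  proof (induction rule: hcX_flip_induct)
    case origin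
    then show ?case using sym[OF that(1)] flip_same[of ?o k] that(1) by (simp add: h_def)
  next
    case (flip x m)
    then show ?case using flip_other[of x k m] flip_same[of x k] that(1) by (cases "m = k") auto
  qed
  have diag_zero: "B x x = 0" if "x \<in> hcX D" for x
    using that
  proof (induction rule: hcX_flip_induct)
    case origin
    then show ?case by (rule diag)
  qed (use local in \<open>simp add: local_commutation_def\<close>)
  have "B x y = 0" for x y
  proof (cases "x \<in> hcX D \<and> y \<in> hcX D \<and> (x = y \<or> hc_adj D x y)")
    case True
    then show ?thesis using diag_zero edge_zero by (auto simp: hc_adj_iff_flip h_def)
  next
    case False
    then show ?thesis using B by (auto simp: edge_supported_def is_hmat_def)
  qed
  then show ?thesis by (simp add: fun_eq_iff)
qed

section \<open>The basis matrices\<close>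

definition coord_sign :: "nat \<Rightarrow> bool list \<Rightarrow> real" where
  "coord_sign i x = (if x ! (i - 1) then -1 else 1)"

definition alpha_star_comm :: "nat \<Rightarrow> nat \<Rightarrow> nat \<Rightarrow> hmat" where
  "alpha_star_comm D i j = hmult D (hmult D (alpha_star D i) (hcA D)) (alpha_star D j)
      - hmult D (hmult D (alpha_star D j) (hcA D)) (alpha_star D i)"

lemma coord_sign_flip:
  "k < length x \<Longrightarrow> coord_sign i (flip x k) = (if k = i - 1 then - coord_sign i x else coord_sign i x)"
  by (auto simp: coord_sign_def flip_def nth_list_update)

lemma coord_sign_origin: "i - 1 < D \<Longrightarrow> coord_sign i (origin D) = 1"
  by (simp add: coord_sign_def origin_def)

lemma hmult_alpha_star_left:
  "hmult D (alpha_star D i) C x y = (if x \<in> hcX D then coord_sign i x * C x y else 0)"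
proof (cases "x \<in> hcX D")
  case True
  have "hmult D (alpha_star D i) C x y = (\<Sum>z\<in>hcX D. if z = x then coord_sign i x * C x y else 0)"
    unfolding hmult_def by (rule sum.cong) (auto simp: alpha_star_def coord_sign_def True)
  then show ?thesis using True finite_hcX by simp
qed (simp add: hmult_def alpha_star_def)

lemma hmult_alpha_star_right:
  "hmult D C (alpha_star D j) x y = (if y \<in> hcX D then C x y * coord_sign j y else 0)"
proof (cases "y \<in> hcX D")
  case True
  have "hmult D C (alpha_star D j) x y = (\<Sum>z\<in>hcX D. if z = y then C x y * coord_sign j y else 0)"
    unfolding hmult_def by (rule sum.cong) (auto simp: alpha_star_def coord_sign_def True)
  then show ?thesis using True finite_hcX by simp
qed (auto simp: hmult_def alpha_star_def intro!: sum.neutral)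

lemma alpha_star_comm_apply:
  "alpha_star_comm D i j x y = (if x \<in> hcX D \<and> y \<in> hcX D
     then hcA D x y * (coord_sign i x * coord_sign j y - coord_sign j x * coord_sign i y) else 0)"
  by (simp add: alpha_star_comm_def hmult_alpha_star_left hmult_alpha_star_right algebra_simps)

lemma hcA_flip: "x \<in> hcX D \<Longrightarrow> k < D \<Longrightarrow> hcA D x (flip x k) = 1"
  by (auto simp: hcA_def hc_adj_iff_flip)

lemma hcA_diag: "hcA D x x = 0"
  using hc_adj_iff_flip[of D x x] by (auto simp: hcA_def hcX_iff)

lemma hcI_flip: "x \<in> hcX D \<Longrightarrow> k < D \<Longrightarrow> hcI D x (flip x k) = 0"
  by (simp add: hcI_def hcX_iff)

lemma alpha_diag: "alpha D i x x = 0"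
  by (simp add: alpha_def)

lemma alpha_flip: "x \<in> hcX D \<Longrightarrow> k < D \<Longrightarrow> 1 \<le> i \<Longrightarrow> i \<le> D \<Longrightarrow>
   alpha D i x (flip x k) = (if k = i - 1 then 1 else 0)"
  by (auto simp: alpha_def nth_flip hcX_iff)

lemma alpha_symmetric: "alpha D i y x = alpha D i x y"
  by (auto simp: alpha_def)

lemma alpha_star_comm_antisym: "alpha_star_comm D i j y x = - alpha_star_comm D i j x y"
  by (simp add: alpha_star_comm_apply hcA_def hc_adj_commute[of D y] algebra_simps)

lemma alpha_star_comm_diag: "alpha_star_comm D i j x x = 0"
  by (simp add: alpha_star_comm_apply hcA_diag)

lemma alpha_star_comm_flip: "x \<in> hcX D \<Longrightarrow> k < D \<Longrightarrow> i - 1 \<noteq> j - 1 \<Longrightarrow>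
   alpha_star_comm D i j x (flip x k) =
     2 * coord_sign i x * coord_sign j x * ((if k = i - 1 then 1 else 0) - (if k = j - 1 then 1 else 0))"
  by (auto simp: alpha_star_comm_apply hcA_flip coord_sign_flip hcX_iff)

lemma local_commutation_hcI: "local_commutation D (hcI D)"
  unfolding local_commutation_def edge_supported_def is_hmat_def
  by (auto simp: hcI_flip hcI_def hcX_iff)

lemma local_commutation_alpha:
  assumes "1 \<le> i" "i \<le> D"
  shows "local_commutation D (alpha D i)"
proof -
  have "alpha D i x y = 0" if "x \<in> hcX D" "y \<in> hcX D" "\<not> hc_adj D x y" for x y
  proof (rule ccontr)
    assume "alpha D i x y \<noteq> 0"
    then have "y = flip x (i - 1)"
      using that assms by (intro nth_equalityI) (auto simp: alpha_def hcX_iff nth_flip split: if_splits)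
    moreover have "i - 1 < D" using assms by simp
    ultimately show False using that by (auto simp: hc_adj_iff_flip)
  qed
  then have "edge_supported D (alpha D i)"
    by (auto simp: edge_supported_def is_hmat_def alpha_def)
  then show ?thesis
    using assms alpha_flip[of "flip x k" D k i for x k]
    by (auto simp: local_commutation_def alpha_flip alpha_diag)
qed

lemma local_commutation_alpha_star_comm:
  assumes "1 \<le> i" "i < j" "j \<le> D"
  shows "local_commutation D (alpha_star_comm D i j)"
  unfolding local_commutation_def
proof (intro conjI ballI allI impI)
  have ij: "i - 1 \<noteq> j - 1" "i - 1 < D" "j - 1 < D" using assms by auto
  show "edge_supported D (alpha_star_comm D i j)"
    by (auto simp: edge_supported_def is_hmat_def alpha_star_comm_apply hcA_def)
  fix x assume x: "x \<in> hcX D"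
  then have lx: "length x = D" by (simp add: hcX_iff)
  show "alpha_star_comm D i j (flip x k) (flip x k) = alpha_star_comm D i j x x" for k
    by (simp add: alpha_star_comm_diag)
  have "(\<Sum>k<D. alpha_star_comm D i j x (flip x k)) = 0"
    using x ij by (simp add: alpha_star_comm_flip sum_subtractf sum_distrib_left[symmetric])
  then show "(\<Sum>k<D. alpha_star_comm D i j x (flip x k)) = (\<Sum>k<D. alpha_star_comm D i j (flip x k) x)"
    by (simp add: alpha_star_comm_antisym[of D i j _ x] sum_negf)
  fix k l assume "k < D" "l < D" "k \<noteq> l"
  then show "alpha_star_comm D i j x (flip x k) + alpha_star_comm D i j x (flip x l) =
      alpha_star_comm D i j (flip x k) (flip (flip x k) l) + alpha_star_comm D i j (flip x l) (flip (flip x l) k)"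
    using x ij lx by (simp add: alpha_star_comm_flip coord_sign_flip)
qed

section \<open>The space of \<open>A\<close>-like matrices\<close>

interpretation hspace: vector_space hscale
  by unfold_locales (auto simp: hscale_def fun_eq_iff algebra_simps)

lemma hmult_add_left: "hmult D (B + C) E = hmult D B E + hmult D C E"
  by (simp add: hmult_def fun_eq_iff sum.distrib distrib_right)

lemma hmult_add_right: "hmult D E (B + C) = hmult D E B + hmult D E C"
  by (simp add: hmult_def fun_eq_iff sum.distrib distrib_left)

lemma hmult_hscale_left: "hmult D (hscale c B) E = hscale c (hmult D B E)"
  by (simp add: hmult_def hscale_def fun_eq_iff sum_distrib_left mult.assoc)

lemma hmult_hscale_right: "hmult D E (hscale c B) = hscale c (hmult D E B)"
  by (simp add: hmult_def hscale_def fun_eq_iff sum_distrib_left mult.left_commute)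

lemma A_like_subspace: "hspace.subspace {B. A_like D B}"
  unfolding hspace.subspace_def
proof (intro conjI ballI allI)
  show "0 \<in> {B. A_like D B}"
    by (simp add: A_like_def is_hmat_def hmult_def fun_eq_iff)
  show "B + C \<in> {B. A_like D B}" if "B \<in> {B. A_like D B}" "C \<in> {B. A_like D B}" for B C
    using that unfolding A_like_def mem_Collect_eq is_hmat_def hmult_add_left hmult_add_right by simp
  show "hscale c B \<in> {B. A_like D B}" if "B \<in> {B. A_like D B}" for c B
    using that unfolding A_like_def mem_Collect_eq is_hmat_def hmult_hscale_left hmult_hscale_right
    by (simp add: hscale_def)
qed

datatype basis_index = Idx_I | Idx_alpha nat | Idx_comm nat nat

definition basis_indices :: "nat \<Rightarrow> basis_index set" where
  "basis_indices D = insert Idx_I (Idx_alpha ` {1..D} \<union> case_prod Idx_comm ` {(i, j). 1 \<le> i \<and> i < j \<and> j \<le> D})"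

primrec basis_matrix :: "nat \<Rightarrow> basis_index \<Rightarrow> hmat" where
  "basis_matrix D Idx_I = hcI D"
| "basis_matrix D (Idx_alpha i) = alpha D i"
| "basis_matrix D (Idx_comm i j) = alpha_star_comm D i j"

text \<open>The coordinates are exactly the data that \<open>local_commutation_eq_zero\<close> needs at the origin;
  they are biorthogonal to the basis matrices with weights 1, 2 and 4.\<close>

primrec basis_coord :: "nat \<Rightarrow> basis_index \<Rightarrow> hmat \<Rightarrow> real" where
  "basis_coord D Idx_I B = B (origin D) (origin D)"
| "basis_coord D (Idx_alpha i) B =
     B (origin D) (flip (origin D) (i - 1)) + B (flip (origin D) (i - 1)) (origin D)"
| "basis_coord D (Idx_comm i j) B =
     B (origin D) (flip (origin D) (i - 1)) - B (flip (origin D) (j - 1)) (flip (flip (origin D) (j - 1)) (i - 1))"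

primrec basis_coord_weight :: "basis_index \<Rightarrow> real" where
  "basis_coord_weight Idx_I = 1"
| "basis_coord_weight (Idx_alpha i) = 2"
| "basis_coord_weight (Idx_comm i j) = 4"

lemma basis_coord_add: "basis_coord D p (B + C) = basis_coord D p B + basis_coord D p C"
  by (cases p) simp_all

lemma basis_coord_hscale: "basis_coord D p (hscale c B) = c * basis_coord D p B"
  by (cases p) (simp_all add: hscale_def algebra_simps)

lemma A_like_basis_matrix: "q \<in> basis_indices D \<Longrightarrow> A_like D (basis_matrix D q)"
  unfolding basis_indices_def A_like_iff_local_commutation
  using local_commutation_hcI local_commutation_alpha local_commutation_alpha_star_comm by auto

lemma A_like_eq_zero_if_basis_coords_zero:
  assumes "A_like D B" and "\<forall>p\<in>basis_indices D. basis_coord D p B = 0"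
  shows "B = 0"
proof (rule local_commutation_eq_zero)
  show "local_commutation D B" using assms(1) by (simp add: A_like_iff_local_commutation)
  have "Idx_I \<in> basis_indices D"
    by (simp add: basis_indices_def)
  then show "B (origin D) (origin D) = 0"
    using assms(2) by fastforce
  show "B (origin D) (flip (origin D) k) + B (flip (origin D) k) (origin D) = 0" if "k < D" for k
  proof -
    have "Idx_alpha (Suc k) \<in> basis_indices D"
      using that by (simp add: basis_indices_def)
    then show ?thesis using assms(2) by fastforce
  qed
  show "B (origin D) (flip (origin D) k) = B (flip (origin D) l) (flip (flip (origin D) l) k)"
    if "k < l" "l < D" for k l
  proof -
    have "Idx_comm (Suc k) (Suc l) \<in> basis_indices D"
      using that unfolding basis_indices_def by (auto intro: image_eqI[of _ _ "(Suc k, Suc l)"])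
    then show ?thesis using assms(2) by fastforce
  qed
qed


lemma basis_coord_Idx_I:
  "basis_coord D Idx_I (basis_matrix D q) = (if q = Idx_I then 1 else 0)"
  by (cases q) (simp_all add: hcI_def alpha_diag alpha_star_comm_diag)

lemma basis_coord_Idx_alpha:
  assumes "1 \<le> i" "i \<le> D" "q \<in> basis_indices D"
  shows "basis_coord D (Idx_alpha i) (basis_matrix D q) = (if q = Idx_alpha i then 2 else 0)"
proof -
  let ?o = "origin D" and ?k = "i - 1"
  have k: "?k < D" using assms by simp
  show ?thesis
  proof (cases q)
    case Idx_I
    then show ?thesis using k by (simp add: hcI_def)
  next
    case (Idx_alpha i')
    then have "1 \<le> i'" "i' \<le> D" using assms(3) by (auto simp: basis_indices_def)
    then show ?thesis using Idx_alpha assms k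
      by (auto simp: alpha_symmetric[of D i' _ "origin D"] alpha_flip)
  next
    case (Idx_comm i' j')
    then show ?thesis by (simp add: alpha_star_comm_antisym[of D i' j' _ "origin D"])
  qed
qed

lemma basis_coord_Idx_comm:
  assumes "1 \<le> i" "i < j" "j \<le> D" "q \<in> basis_indices D"
  shows "basis_coord D (Idx_comm i j) (basis_matrix D q) = (if q = Idx_comm i j then 4 else 0)"
proof -
  let ?o = "origin D"
  have k: "i - 1 < D" "j - 1 < D" "i - 1 \<noteq> j - 1" using assms by auto
  show ?thesis
  proof (cases q)
    case Idx_I
    then show ?thesis using k by (simp add: hcI_def)
  next
    case (Idx_alpha i')
    then have "1 \<le> i'" "i' \<le> D" using assms(4) by (auto simp: basis_indices_def)
    then show ?thesis using Idx_alpha k by (simp add: alpha_flip)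
  next
    case (Idx_comm i' j')
    then have "1 \<le> i'" "i' < j'" "j' \<le> D" using assms(4) by (auto simp: basis_indices_def)
    moreover have "i' - 1 < D" "j' - 1 < D" "i' - 1 \<noteq> j' - 1" using calculation by auto
    ultimately show ?thesis using Idx_comm assms k
      by (auto simp: alpha_star_comm_flip coord_sign_flip coord_sign_origin)
  qed
qed

lemma basis_coord_basis_matrix:
  assumes p: "p \<in> basis_indices D" and q: "q \<in> basis_indices D"
  shows "basis_coord D p (basis_matrix D q) = (if p = q then basis_coord_weight p else 0)"
proof -
  consider "p = Idx_I" | i where "p = Idx_alpha i" "1 \<le> i" "i \<le> D"
    | i j where "p = Idx_comm i j" "1 \<le> i" "i < j" "j \<le> D"
    using p by (auto simp: basis_indices_def)
  then show ?thesis
  proof cases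
    case 1
    then show ?thesis using basis_coord_Idx_I[of D q] by simp
  next
    case (2 i)
    then show ?thesis using basis_coord_Idx_alpha[OF 2(2,3) q] by auto
  next
    case (3 i j)
    then show ?thesis using basis_coord_Idx_comm[OF 3(2-4) q] by auto
  qed
qed

definition strict_pairs :: "nat \<Rightarrow> (nat \<times> nat) set" where
  "strict_pairs D = {(i, j). 1 \<le> i \<and> i < j \<and> j \<le> D}"

lemma finite_strict_pairs: "finite (strict_pairs D)"
  by (rule finite_subset[of _ "{0..D} \<times> {0..D}"]) (auto simp: strict_pairs_def)

lemma card_strict_pairs: "card (strict_pairs D) = D choose 2"
proof (induction D)
  case 0
  have "strict_pairs 0 = {}" by (auto simp: strict_pairs_def)
  then show ?case by simp
next
  case (Suc n)
  have "strict_pairs (Suc n) = strict_pairs n \<union> (\<lambda>i. (i, Suc n)) ` {1..n}"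
    by (auto simp: strict_pairs_def)
  then have "card (strict_pairs (Suc n)) = card (strict_pairs n) + card ((\<lambda>i. (i, Suc n)) ` {1..n})"
    using finite_strict_pairs[of n] by (auto simp: strict_pairs_def intro: card_Un_disjoint)
  also have "card ((\<lambda>i. (i, Suc n)) ` {1..n}) = n"
    by (subst card_image) (auto simp: inj_on_def)
  finally show ?case using Suc by (simp add: numeral_2_eq_2)
qed

lemma finite_basis_indices: "finite (basis_indices D)"
  using finite_strict_pairs[of D] by (simp add: basis_indices_def strict_pairs_def)

lemma card_basis_indices: "card (basis_indices D) = 1 + D + (D choose 2)"
proof -
  have "card (Idx_alpha ` {1..D}) = D"
    by (simp add: card_image inj_on_def)
  moreover have "card (case_prod Idx_comm ` strict_pairs D) = D choose 2"
    by (subst card_image) (auto simp: inj_on_def card_strict_pairs)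
  moreover have "card (Idx_alpha ` {1..D} \<union> case_prod Idx_comm ` strict_pairs D) =
      card (Idx_alpha ` {1..D}) + card (case_prod Idx_comm ` strict_pairs D)"
    using finite_strict_pairs[of D] by (intro card_Un_disjoint) auto
  ultimately show ?thesis
    unfolding basis_indices_def strict_pairs_def[symmetric] using finite_strict_pairs[of D]
    by (subst card_insert_disjoint) auto
qed

lemma hbasis_set_eq_image: "hbasis_set D = basis_matrix D ` basis_indices D"
proof -
  have "{alpha_star_comm D i j | i j. 1 \<le> i \<and> i < j \<and> j \<le> D} =
      (\<lambda>(i, j). alpha_star_comm D i j) ` {(i, j). 1 \<le> i \<and> i < j \<and> j \<le> D}"
    by (auto intro: image_eqI[where x = "(i, j)" for i j])
  also have "\<dots> = basis_matrix D ` case_prod Idx_comm ` {(i, j). 1 \<le> i \<and> i < j \<and> j \<le> D}"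
    by (simp add: image_image case_prod_beta')
  finally show ?thesis
    unfolding hbasis_set_def basis_indices_def alpha_star_comm_def[symmetric]
    by (simp add: image_Un image_image)
qed

theorem corollary9p8:
  fixes D :: nat
  assumes "D \<ge> 1"
  shows "\<not> module.dependent hscale (hbasis_set D)
       \<and> module.span hscale (hbasis_set D) = {B. A_like D B}
       \<and> card (hbasis_set D) = 1 + D + (D choose 2)
       \<and> vector_space.dim hscale {B. A_like D B} = 1 + D + (D choose 2)"
proof -
  note basis = hspace.biorthogonal_basis[where v = "basis_matrix D" and phi = "basis_coord D"
      and c = basis_coord_weight, OF finite_basis_indices A_like_subspace _ basis_coord_add
      basis_coord_hscale basis_coord_basis_matrix _ A_like_eq_zero_if_basis_coords_zero]
  have "basis_matrix D ` basis_indices D \<subseteq> {B. A_like D B}"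
    using A_like_basis_matrix by blast
  moreover have "basis_coord_weight p \<noteq> 0" for p
    by (cases p) simp_all
  ultimately show ?thesis
    using basis card_image[of "basis_matrix D" "basis_indices D"]
    by (simp add: hbasis_set_eq_image card_basis_indices)
qed

end
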